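(* There is an absolute constant $K$ such that for every $0<\epsilon<1$ and every $N\ge1$: at any time after a total of $N$ insertions into a soft sequence heap with error parameter $\epsilon$, the total number of items contained in the sequences $L_1,\dots,L_\ell$ is at most $K\sqrt{N/\epsilon}$.
   Context: Soft sequence heap with error parameter $0<\epsilon<1$ and $r_0=\lceil \lg(1/\epsilon)\rceil$ ($\lg$ = binary logarithm). The heap stores a list $L_1,\dots,L_\ell$ of nonempty sequences of items, each sorted increasingly by key and having a nonnegative integer rank, with strictly increasing (hence distinct) ranks. The operation $\mathrm{reduce}(L)$ on a sorted sequence $L=e_1,\dots,e_m$ removes $e_{2i}$ from $L$ for every $1\le i<m/2$, so the result has $\lceil (m+1)/2\rceil$ items (removed items are moved into auxiliary corruption/witness sets, not counted as sequence items). A sequence of rank $0$ is created by an insertion and contains one item. A sequence of rank $r+1$ is created only by merging (sorted union) two sequences of rank $r$; if $r+1>r_0$ and $r+1-r_0$ is even, $\mathrm{reduce}$ is then applied. Insertions and melds repeatedly merge equal-rank sequences until all ranks are distinct; otherwise items are only removed from sequences. *)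

theory Defs
  imports Complex_Main "HOL-Library.Sublist" "HOL-Library.Multiset"
begin

text \<open>A soft sequence heap is modelled as a list of (rank, sequence) pairs.
  Items are elements of a linearly ordered type (the key order).\<close>

type_synonym 'a sheap = "(nat \<times> 'a list) list"

definition r0 :: "real \<Rightarrow> nat" where
  "r0 eps = nat \<lceil>log 2 (1 / eps)\<rceil>"

text \<open>reduce e_1..e_m removes e_{2i} for 1 <= i < m/2; 0-indexed: drop index k
  when k is odd and k+1 < m.\<close>
definition reduce :: "'a list \<Rightarrow> 'a list" where
  "reduce L = map (nth L) (filter (\<lambda>k. even k \<or> k + 1 = length L) [0..<length L])"

definition merge_seq :: "real \<Rightarrow> nat \<Rightarrow> 'a::linorder list \<Rightarrow> 'a list \<Rightarrow> 'a list" where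
  "merge_seq eps r xs ys =
     (let L = sort (xs @ ys) in
      if r + 1 > r0 eps \<and> even (r + 1 - r0 eps) then reduce L else L)"

definition comb_step :: "real \<Rightarrow> 'a::linorder sheap \<Rightarrow> 'a sheap \<Rightarrow> bool" where
  "comb_step eps H H' \<longleftrightarrow>
     (\<exists>i j. i < length H \<and> j < length H \<and> i \<noteq> j \<and> fst (H ! i) = fst (H ! j) \<and>
        H' = (fst (H ! i) + 1, merge_seq eps (fst (H ! i)) (snd (H ! i)) (snd (H ! j)))
             # map (nth H) (filter (\<lambda>k. k \<noteq> i \<and> k \<noteq> j) [0..<length H]))"

definition consolidate :: "real \<Rightarrow> 'a::linorder sheap \<Rightarrow> 'a sheap \<Rightarrow> bool" where
  "consolidate eps H H'' \<longleftrightarrow>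
     (\<exists>H'. (comb_step eps)\<^sup>*\<^sup>* H H' \<and> distinct (map fst H') \<and>
        mset H'' = mset H' \<and> sorted_wrt (<) (map fst H''))"

text \<open>Removal of items from sequences (e.g. by extract-min); emptied sequences disappear,
  ranks are unchanged.\<close>
definition remove_items :: "'a sheap \<Rightarrow> 'a sheap \<Rightarrow> bool" where
  "remove_items H H' \<longleftrightarrow>
     (\<exists>Ls. length Ls = length H \<and> (\<forall>i < length H. subseq (Ls ! i) (snd (H ! i))) \<and>
        H' = filter (\<lambda>p. snd p \<noteq> []) (zip (map fst H) Ls))"

inductive reach :: "real \<Rightarrow> 'a::linorder sheap \<Rightarrow> nat \<Rightarrow> bool" for eps where
  empty: "reach eps [] 0"
| insert: "reach eps H N \<Longrightarrow> consolidate eps ((0, [x]) # H) H' \<Longrightarrow> reach eps H' (Suc N)"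
| meld: "reach eps H1 N1 \<Longrightarrow> reach eps H2 N2 \<Longrightarrow> consolidate eps (H1 @ H2) H'
         \<Longrightarrow> reach eps H' (N1 + N2)"
| remove: "reach eps H N \<Longrightarrow> remove_items H H' \<Longrightarrow> reach eps H' N"

definition total_items :: "'a sheap \<Rightarrow> nat" where
  "total_items H = (\<Sum>p\<leftarrow>H. length (snd p))"

end

theory Submission
  imports Defs
begin

text \<open>A sequence of rank \<open>r\<close> holds at most \<open>capacity r\<^sub>0 r\<close> items: the capacity doubles with
  each rank up to \<open>r\<^sub>0\<close> and afterwards only at every second rank, because \<open>reduce\<close> halves the
  merged sequence, so it is at most \<open>\<surd>8 \<cdot> \<surd>(2\<^sup>r \<cdot> 2\<^sup>r\<^sup>0)\<close>. A rank-\<open>r\<close> sequence also absorbs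
  \<open>2\<^sup>r\<close> insertions, so every rank in the heap satisfies \<open>2\<^sup>r \<le> N\<close>; as the ranks are distinct,
  the bounds form a geometric series dominated by its largest term, and the total is
  \<open>O(\<surd>(N \<cdot> 2\<^sup>r\<^sup>0)) = O(\<surd>(N/\<epsilon>))\<close>.\<close>

text \<open>Merging adds lengths, and \<open>reduce\<close> turns \<open>2b\<close> items into at most \<open>b + 1\<close>.\<close>
fun capacity :: "nat \<Rightarrow> nat \<Rightarrow> nat" where
  "capacity c 0 = 1"
| "capacity c (Suc r) = (if c < Suc r \<and> even (Suc r - c) then capacity c r + 1 else 2 * capacity c r)"

lemma capacity_below: "r \<le> c \<Longrightarrow> capacity c r = 2 ^ r"
  by (induction r) auto

lemma capacity_above:
  "capacity c (c + 2 * j) + 1 = 2 ^ j * (2 ^ c + 1) \<and>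
   capacity c (c + 2 * j + 1) + 2 = 2 ^ Suc j * (2 ^ c + 1)"
proof (induction j)
  case 0
  then show ?case by (simp add: capacity_below)
next
  case (Suc j)
  have "capacity c (Suc (c + 2 * j + 1)) = capacity c (c + 2 * j + 1) + 1"
    by simp
  moreover have "capacity c (Suc (c + 2 * Suc j)) = 2 * capacity c (c + 2 * Suc j)"
    by simp
  moreover have "Suc (c + 2 * j + 1) = c + 2 * Suc j" by simp
  ultimately show ?case using Suc.IH by simp
qed

lemma capacity_sq_le: "capacity c r ^ 2 \<le> 8 * 2 ^ r * 2 ^ c"
proof (cases "r \<le> c")
  case True
  then have "(2::nat) ^ r \<le> 8 * 2 ^ c"
    using power_increasing[OF True, of "2::nat"] by linarith
  then show ?thesis using True by (simp add: capacity_below power2_eq_square)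
next
  case False
  define j where "j = (r - c) div 2"
  have "2 ^ c + 1 \<le> (2::nat) ^ Suc c" by simp
  have "r = c + 2 * j \<or> r = c + 2 * j + 1" unfolding j_def using False by presburger
  then show ?thesis
  proof
    assume 1: "r = c + 2 * j"
    then have "capacity c r \<le> 2 ^ j * 2 ^ Suc c"
      using capacity_above[of c j] \<open>2 ^ c + 1 \<le> 2 ^ Suc c\<close>
      by (metis add_leD1 mult_le_mono2)
    then have "capacity c r ^ 2 \<le> (2 ^ j * 2 ^ Suc c) ^ 2" by (rule power_mono) simp
    also have "\<dots> = 4 * 2 ^ r * 2 ^ c" using 1
      by (simp add: power2_eq_square power_add power_mult algebra_simps)
    finally show ?thesis by simp
  next
    assume 2: "r = c + 2 * j + 1"
    then have "capacity c r \<le> 2 ^ Suc j * 2 ^ Suc c"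
      using capacity_above[of c j] \<open>2 ^ c + 1 \<le> 2 ^ Suc c\<close>
      by (metis add_leD1 mult_le_mono2)
    then have "capacity c r ^ 2 \<le> (2 ^ Suc j * 2 ^ Suc c) ^ 2" by (rule power_mono) simp
    also have "\<dots> = 8 * 2 ^ r * 2 ^ c" using 2
      by (simp add: power2_eq_square power_add power_mult algebra_simps)
    finally show ?thesis by simp
  qed
qed

lemma capacity_le_sqrt: "real (capacity c r) \<le> sqrt 8 * sqrt (2 ^ c) * sqrt (2 ^ r)"
proof -
  have "real (capacity c r ^ 2) \<le> real (8 * 2 ^ r * 2 ^ c)"
    using capacity_sq_le[of c r] by (simp only: of_nat_le_iff)
  then have "real (capacity c r) ^ 2 \<le> 8 * 2 ^ r * 2 ^ c" by simp
  then have "real (capacity c r) \<le> sqrt (8 * 2 ^ r * 2 ^ c)" by (rule real_le_rsqrt)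
  then show ?thesis by (simp add: real_sqrt_mult mult_ac)
qed

lemma length_reduce_le: "length (reduce L) \<le> (length L + 1) div 2 + 1"
proof -
  have "length (filter (\<lambda>k. even k \<or> k + 1 = c) [0..<m]) \<le> (m + 1) div 2 + (if c \<le> m then 1 else 0)"
    for c m :: nat
    by (induction m) (auto split: if_splits)
  from this[of "length L" "length L"] show ?thesis
    unfolding reduce_def by simp
qed

lemma length_merge_seq_le:
  assumes "length xs \<le> capacity (r0 eps) r" "length ys \<le> capacity (r0 eps) r"
  shows "length (merge_seq eps r xs ys) \<le> capacity (r0 eps) (Suc r)"
proof (cases "r0 eps < Suc r \<and> even (Suc r - r0 eps)")
  case True
  then have "merge_seq eps r xs ys = reduce (sort (xs @ ys))"
    unfolding merge_seq_def Let_def by presburger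
  then have "length (merge_seq eps r xs ys) \<le> (length xs + length ys + 1) div 2 + 1"
    using length_reduce_le[of "sort (xs @ ys)"] by simp
  also have "\<dots> \<le> capacity (r0 eps) r + 1" using assms by linarith
  finally show ?thesis by (simp only: capacity.simps if_P[OF True])
next
  case False
  then have "merge_seq eps r xs ys = sort (xs @ ys)"
    unfolding merge_seq_def Let_def by presburger
  then show ?thesis using assms by (simp only: capacity.simps if_not_P[OF False]) simp
qed

lemma sum_sqrt2_power_le: "(\<Sum>r\<le>R. sqrt 2 ^ r) \<le> 4 * sqrt 2 ^ R"
proof (induction R)
  case 0
  then show ?case by simp
next
  case (Suc R)
  have "4 / 3 \<le> sqrt (2::real)" by (rule real_le_rsqrt) (simp add: power2_eq_square)
  have "(\<Sum>r\<le>Suc R. sqrt 2 ^ r) \<le> 4 * sqrt 2 ^ R + sqrt 2 * sqrt 2 ^ R"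
    using Suc.IH by simp
  also have "\<dots> = (4 + sqrt 2) * sqrt 2 ^ R" by (simp add: algebra_simps)
  also have "\<dots> \<le> 4 * sqrt 2 * sqrt 2 ^ R"
    using \<open>4 / 3 \<le> sqrt 2\<close> by (intro mult_right_mono) auto
  finally show ?case by simp
qed

lemma sum_list_sqrt_pow2_le:
  assumes "distinct rs" "\<forall>r\<in>set rs. 2 ^ r \<le> N"
  shows "(\<Sum>r\<leftarrow>rs. sqrt (2 ^ r)) \<le> 4 * sqrt (real N)"
proof (cases "rs = []")
  case False
  define R where "R = Max (set rs)"
  have "R \<in> set rs" using False unfolding R_def by simp
  have "(\<Sum>r\<leftarrow>rs. sqrt (2 ^ r)) = (\<Sum>r\<in>set rs. sqrt 2 ^ r)"
    using assms(1) by (simp add: sum_list_distinct_conv_sum_set real_sqrt_power)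
  also have "\<dots> \<le> (\<Sum>r\<le>R. sqrt 2 ^ r)"
    by (rule sum_mono2) (auto simp: R_def)
  also have "\<dots> \<le> 4 * sqrt (2 ^ R)"
    using sum_sqrt2_power_le by (simp add: real_sqrt_power)
  also have "\<dots> \<le> 4 * sqrt (real N)"
    using assms(2) \<open>R \<in> set rs\<close>
    by (simp add: numeral_power_le_of_nat_cancel_iff)
  finally show ?thesis .
qed simp

lemma pow2_r0_le:
  assumes "0 < eps" "eps < 1"
  shows "(2::real) ^ r0 eps \<le> 2 / eps"
proof -
  have "0 < log 2 (1 / eps)" using assms by simp
  then have "(2::real) ^ r0 eps = 2 powr \<lceil>log 2 (1 / eps)\<rceil>"
    unfolding r0_def by (simp add: powr_realpow [symmetric])
  also have "\<dots> \<le> 2 powr (log 2 (1 / eps) + 1)"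
    by (intro powr_mono) (linarith, simp)
  also have "\<dots> = 2 / eps" using assms by (simp add: powr_add)
  finally show ?thesis .
qed

definition within_capacity :: "nat \<Rightarrow> 'a sheap \<Rightarrow> bool" where
  "within_capacity c H \<longleftrightarrow> (\<forall>p\<in>set H. length (snd p) \<le> capacity c (fst p))"

definition rank_weight :: "'a sheap \<Rightarrow> nat" where
  "rank_weight H = (\<Sum>r\<leftarrow>map fst H. 2 ^ r)"

lemma comb_step_within_capacity:
  assumes "comb_step eps H H'" "within_capacity (r0 eps) H"
  shows "within_capacity (r0 eps) H'"
proof -
  obtain i j where ij: "i < length H" "j < length H" "fst (H ! i) = fst (H ! j)"
    and H': "H' = (fst (H ! i) + 1, merge_seq eps (fst (H ! i)) (snd (H ! i)) (snd (H ! j)))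
             # map (nth H) (filter (\<lambda>k. k \<noteq> i \<and> k \<noteq> j) [0..<length H])"
    using assms(1) unfolding comb_step_def by blast
  have "length (merge_seq eps (fst (H ! i)) (snd (H ! i)) (snd (H ! j)))
      \<le> capacity (r0 eps) (Suc (fst (H ! i)))"
    using assms(2) nth_mem[OF ij(1)] nth_mem[OF ij(2)] ij(3)
    by (intro length_merge_seq_le) (auto simp: within_capacity_def)
  then show ?thesis using assms(2) unfolding H' within_capacity_def by auto
qed

lemma comb_step_rank_weight:
  assumes "comb_step eps H H'"
  shows "rank_weight H' = rank_weight H"
proof -
  obtain i j where ij: "i < length H" "j < length H" "i \<noteq> j" "fst (H ! i) = fst (H ! j)"
    and H': "H' = (fst (H ! i) + 1, merge_seq eps (fst (H ! i)) (snd (H ! i)) (snd (H ! j)))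
             # map (nth H) (filter (\<lambda>k. k \<noteq> i \<and> k \<noteq> j) [0..<length H])"
    using assms unfolding comb_step_def by blast
  define w where "w k = (2::nat) ^ fst (H ! k)" for k
  define rest where "rest = {0..<length H} - {i} - {j}"
  have "rank_weight H = (\<Sum>k = 0..<length H. w k)"
    unfolding rank_weight_def w_def by (simp add: sum_list_sum_nth)
  also have "\<dots> = w i + w j + sum w rest"
    using ij unfolding rest_def by (simp add: sum.remove add.assoc)
  finally have "rank_weight H = 2 ^ Suc (fst (H ! i)) + sum w rest"
    using ij(4) unfolding w_def by simp
  moreover have "rank_weight H' = 2 ^ Suc (fst (H ! i)) + sum w rest"
    unfolding H' rank_weight_def w_def rest_def
    by (simp add: comp_def sum_list_distinct_conv_sum_set) (auto intro: sum.cong)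
  ultimately show ?thesis by simp
qed

lemma consolidate_invariant:
  assumes "consolidate eps H H'" "within_capacity (r0 eps) H"
  shows "within_capacity (r0 eps) H' \<and> rank_weight H' = rank_weight H \<and> sorted_wrt (<) (map fst H')"
proof -
  obtain G where G: "(comb_step eps)\<^sup>*\<^sup>* H G" "mset H' = mset G" "sorted_wrt (<) (map fst H')"
    using assms(1) unfolding consolidate_def by blast
  have "within_capacity (r0 eps) G \<and> rank_weight G = rank_weight H"
    using G(1) by (induction rule: rtranclp_induct)
      (auto simp: assms(2) comb_step_within_capacity comb_step_rank_weight)
  moreover have "set H' = set G" using mset_eq_setD[OF G(2)] .
  moreover have "rank_weight H' = rank_weight G"
    unfolding rank_weight_def by (metis G(2) mset_map sum_mset_sum_list)
  ultimately show ?thesis using G(3) by (simp add: within_capacity_def)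
qed

lemma remove_items_invariant:
  assumes "remove_items H H'" "within_capacity c H" "sorted_wrt (<) (map fst H)"
  shows "within_capacity c H' \<and> rank_weight H' \<le> rank_weight H \<and> sorted_wrt (<) (map fst H')"
proof -
  obtain Ls where Ls: "length Ls = length H" "\<forall>i < length H. subseq (Ls ! i) (snd (H ! i))"
    and H': "H' = filter (\<lambda>p. snd p \<noteq> []) (zip (map fst H) Ls)"
    using assms(1) unfolding remove_items_def by blast
  let ?Z = "zip (map fst H) Ls"
  have ranks: "map fst ?Z = map fst H" using Ls(1) by simp
  have "within_capacity c ?Z"
    unfolding within_capacity_def
  proof
    fix p assume "p \<in> set ?Z"
    then obtain i where i: "i < length H" "p = (fst (H ! i), Ls ! i)"
      using Ls(1) by (auto simp: set_zip)
    have "length (Ls ! i) \<le> length (snd (H ! i))" using Ls(2) i(1) by (blast intro: list_emb_length)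
    also have "\<dots> \<le> capacity c (fst (H ! i))" using assms(2) i(1) by (simp add: within_capacity_def)
    finally show "length (snd p) \<le> capacity c (fst p)" using i(2) by simp
  qed
  then have "within_capacity c H'" unfolding H' within_capacity_def by simp
  moreover have "rank_weight H' \<le> rank_weight ?Z"
    unfolding H' rank_weight_def by (simp add: comp_def sum_list_filter_le_nat)
  moreover have "sorted_wrt (\<lambda>p q. fst p < fst q) ?Z"
    using assms(3) ranks by (metis sorted_wrt_map)
  then have "sorted_wrt (<) (map fst H')" unfolding H' by (simp add: sorted_wrt_map sorted_wrt_filter)
  ultimately show ?thesis using ranks by (simp add: rank_weight_def)
qed

lemma reach_invariant:
  "reach eps H N \<Longrightarrow>
   within_capacity (r0 eps) H \<and> rank_weight H \<le> N \<and> sorted_wrt (<) (map fst H)"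
proof (induction rule: reach.induct)
  case empty
  then show ?case by (simp add: within_capacity_def rank_weight_def)
next
  case (insert H N x H')
  have "within_capacity (r0 eps) ((0, [x]) # H)" using insert.IH by (simp add: within_capacity_def)
  from consolidate_invariant[OF insert.hyps(2) this] insert.IH show ?case
    by (simp add: rank_weight_def)
next
  case (meld H1 N1 H2 N2 H')
  have "within_capacity (r0 eps) (H1 @ H2)" using meld.IH by (auto simp: within_capacity_def)
  from consolidate_invariant[OF meld.hyps(3) this] meld.IH show ?case
    by (simp add: rank_weight_def)
next
  case (remove H N H')
  then show ?case using remove_items_invariant[OF remove.hyps(2)] by fastforce
qed

lemma total_items_le:
  assumes "within_capacity c H" "distinct (map fst H)" "rank_weight H \<le> N"
  shows "real (total_items H) \<le> 4 * sqrt 8 * sqrt (2 ^ c) * sqrt (real N)"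
proof -
  have ranks: "\<forall>r\<in>set (map fst H). 2 ^ r \<le> N"
    using assms(3) member_le_sum_list[of _ "map (\<lambda>r. 2 ^ r) (map fst H)"]
    by (fastforce simp: rank_weight_def)
  have "real (total_items H) = (\<Sum>p\<leftarrow>H. real (length (snd p)))"
    unfolding total_items_def by (simp add: sum_list_of_nat [symmetric] comp_def)
  also have "\<dots> \<le> (\<Sum>p\<leftarrow>H. sqrt 8 * sqrt (2 ^ c) * sqrt (2 ^ fst p))"
  proof (rule sum_list_mono)
    fix p assume "p \<in> set H"
    then have "real (length (snd p)) \<le> real (capacity c (fst p))"
      using assms(1) by (simp add: within_capacity_def)
    also have "\<dots> \<le> sqrt 8 * sqrt (2 ^ c) * sqrt (2 ^ fst p)" by (rule capacity_le_sqrt)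
    finally show "real (length (snd p)) \<le> sqrt 8 * sqrt (2 ^ c) * sqrt (2 ^ fst p)" .
  qed
  also have "\<dots> = sqrt 8 * sqrt (2 ^ c) * (\<Sum>r\<leftarrow>map fst H. sqrt (2 ^ r))"
    by (simp add: sum_list_const_mult comp_def)
  also have "\<dots> \<le> sqrt 8 * sqrt (2 ^ c) * (4 * sqrt (real N))"
    using sum_list_sqrt_pow2_le[OF assms(2) ranks] by (intro mult_left_mono) auto
  finally show ?thesis by (simp add: mult_ac)
qed

theorem lemma3:
  "\<exists>K::real. \<forall>(eps::real) (N::nat) (H::'a::linorder sheap).
     0 < eps \<longrightarrow> eps < 1 \<longrightarrow> 1 \<le> N \<longrightarrow> reach eps H N \<longrightarrow>
     real (total_items H) \<le> K * sqrt (real N / eps)"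
proof (intro exI allI impI)
  fix eps :: real and N :: nat and H :: "'a sheap"
  assume "0 < eps" "eps < 1" "1 \<le> N" "reach eps H N"
  then have "within_capacity (r0 eps) H" "distinct (map fst H)" "rank_weight H \<le> N"
    using reach_invariant strict_sorted_iff by blast+
  then have "real (total_items H) \<le> 4 * sqrt 8 * sqrt (2 ^ r0 eps) * sqrt (real N)"
    by (rule total_items_le)
  also have "\<dots> \<le> 4 * sqrt 8 * sqrt (2 / eps) * sqrt (real N)"
    using pow2_r0_le[OF \<open>0 < eps\<close> \<open>eps < 1\<close>] by (intro mult_right_mono mult_left_mono) auto
  also have "\<dots> = 4 * (sqrt 8 * sqrt 2) * sqrt (real N / eps)"
    by (simp add: real_sqrt_mult real_sqrt_divide)
  also have "sqrt 8 * sqrt 2 = (4::real)"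
    using real_sqrt_abs[of 4] by (simp flip: real_sqrt_mult)
  finally show "real (total_items H) \<le> 16 * sqrt (real N / eps)" by simp
qed

end
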